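(* A multiplicative function $m:\mathbb{R}_+\to\mathbb{R}_+$ is Jensen convex (i.e. $m\big(\frac{x+y}{2}\big)\le\frac{m(x)+m(y)}{2}$ for all $x,y>0$) if and only if there exists an additive function $a:\mathbb{R}\to\mathbb{R}$ such that \[ m(t)\ge 1+a(t-1)\qquad(t\in\mathbb{R}_+). \]
   Context: $\mathbb{R}_+=]0,\infty[$. $m:\mathbb{R}_+\to\mathbb{R}_+$ is multiplicative if $m(xy)=m(x)m(y)$ for all $x,y>0$; $a:\mathbb{R}\to\mathbb{R}$ is additive if $a(x+y)=a(x)+a(y)$ for all $x,y\in\mathbb{R}$. *)

theory Defs
  imports Complex_Main
begin

definition multiplicative_pos :: "(real \<Rightarrow> real) \<Rightarrow> bool" where
  "multiplicative_pos m \<longleftrightarrow> (\<forall>x>0. m x > 0) \<and> (\<forall>x>0. \<forall>y>0. m (x * y) = m x * m y)"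

definition additive :: "(real \<Rightarrow> real) \<Rightarrow> bool" where
  "additive a \<longleftrightarrow> (\<forall>x y. a (x + y) = a x + a y)"

definition jensen_convex_pos :: "(real \<Rightarrow> real) \<Rightarrow> bool" where
  "jensen_convex_pos m \<longleftrightarrow> (\<forall>x>0. \<forall>y>0. m ((x + y) / 2) \<le> (m x + m y) / 2)"

end

theory Submission imports Defs begin

text \<open>
  If \<open>a\<close> is additive and \<open>m t \<ge> 1 + a (t - 1)\<close>, put \<open>u = (x + y) / 2\<close>: the points \<open>x / u\<close> and
  \<open>y / u\<close> average to \<open>1\<close>, so the \<open>a\<close>-terms cancel and \<open>m (x / u) + m (y / u) \<ge> 2\<close>, which
  multiplicativity turns into Jensen's inequality.

  Conversely, \<open>f s = m (1 + s) - 1\<close> is midpoint convex on \<open>]-1, \<infinity>[\<close> with \<open>f 0 = 0\<close>, so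
  \<open>2 ^ k * f (s / 2 ^ k)\<close> decreases in \<open>k\<close>. Its infimum \<open>p\<close> is defined on all of \<open>\<real>\<close>, lies below
  \<open>f\<close>, is subadditive and satisfies \<open>p (2 * s) = 2 * p s\<close>. An additive \<open>a \<le> p\<close> is obtained as in
  the Hahn-Banach theorem: by Zorn's lemma there is a minimal such function below \<open>p\<close>, and
  minimality forces additivity.
\<close>

definition dyadically_sublinear :: "(real \<Rightarrow> real) \<Rightarrow> bool" where
  "dyadically_sublinear q \<longleftrightarrow> (\<forall>x y. q (x + y) \<le> q x + q y) \<and> (\<forall>x. q (2 * x) = 2 * q x)"

lemma dyadically_sublinearD:
  assumes "dyadically_sublinear q"
  shows dyadically_sublinear_add: "q (x + y) \<le> q x + q y"
    and dyadically_sublinear_double: "q (2 * x) = 2 * q x"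
  using assms unfolding dyadically_sublinear_def by auto

lemma dyadically_sublinear_zero: "dyadically_sublinear q \<Longrightarrow> q 0 = 0"
  using dyadically_sublinear_double[of q 0] by simp

lemma dyadically_sublinear_power2: "dyadically_sublinear q \<Longrightarrow> q (2 ^ k * x) = 2 ^ k * q x"
  by (induction k) (auto simp: dyadically_sublinear_double mult.assoc)

lemma dyadically_sublinear_neg_le: "dyadically_sublinear q \<Longrightarrow> - q (- x) \<le> q x"
  using dyadically_sublinear_add[of q x "- x"] dyadically_sublinear_zero[of q] by simp

lemma dyadically_sublinear_Inf_decreasing:
  fixes V :: "real \<Rightarrow> nat \<Rightarrow> bool" and E :: "real \<Rightarrow> nat \<Rightarrow> real"
  assumes mono: "\<And>s k k'. V s k \<Longrightarrow> k \<le> k' \<Longrightarrow> V s k' \<and> E s k' \<le> E s k"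
    and ex: "\<And>s. \<exists>k. V s k"
    and add: "\<And>x y k. V x k \<Longrightarrow> V y k \<Longrightarrow> V (x + y) (Suc k) \<and> E (x + y) (Suc k) \<le> E x k + E y k"
    and double: "\<And>s k. V s k \<Longrightarrow> V (2 * s) (Suc k) \<and> E (2 * s) (Suc k) = 2 * E s k"
    and half: "\<And>s k. V (2 * s) k \<Longrightarrow> V s k"
    and bdd: "\<And>s. \<exists>B. \<forall>k. V s k \<longrightarrow> B \<le> E s k"
  defines "P \<equiv> \<lambda>s. Inf (E s ` {k. V s k})"
  shows "dyadically_sublinear P" and "\<And>s k. V s k \<Longrightarrow> P s \<le> E s k"
proof -
  have ne: "E s ` {k. V s k} \<noteq> {}" for s
    using ex[of s] by auto
  have bb: "bdd_below (E s ` {k. V s k})" for s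
    using bdd[of s] unfolding bdd_below_def by auto
  show le: "P s \<le> E s k" if "V s k" for s k
    unfolding P_def using that by (intro cInf_lower[OF _ bb]) auto
  have Inf_greatest: "c \<le> P s" if "\<And>k. V s k \<Longrightarrow> c \<le> E s k" for c s
    unfolding P_def using that by (intro cInf_greatest[OF ne]) auto
  have "P (x + y) \<le> E x j + E y l" if "V x j" "V y l" for x y j l
  proof -
    define k where "k = max j l"
    have "V x k" "E x k \<le> E x j" "V y k" "E y k \<le> E y l"
      using mono[OF \<open>V x j\<close>, of k] mono[OF \<open>V y l\<close>, of k] by (auto simp: k_def)
    then show ?thesis
      using add[of x k y] le[of "x + y" "Suc k"] by fastforce
  qed
  then have "P (x + y) - E x j \<le> P y" if "V x j" for x y j
    using that by (intro Inf_greatest) (simp add: diff_le_eq add.commute)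
  then have "P (x + y) - P y \<le> P x" for x y
    by (intro Inf_greatest) (simp add: diff_le_eq add.commute)
  then have "P (x + y) \<le> P x + P y" for x y
    by (simp add: diff_le_eq add.commute)
  moreover have "P (2 * s) = 2 * P s" for s
  proof (rule antisym)
    have "P (2 * s) / 2 \<le> P s"
      using double le[of "2 * s"] by (intro Inf_greatest) fastforce
    then show "P (2 * s) \<le> 2 * P s" by simp
    have "2 * P s \<le> E (2 * s) k" if "V (2 * s) k" for k
      using le[OF half[OF that]] double[OF half[OF that]] mono[OF that, of "Suc k"] by auto
    then show "2 * P s \<le> P (2 * s)"
      by (rule Inf_greatest)
  qed
  ultimately show "dyadically_sublinear P"
    unfolding dyadically_sublinear_def by auto
qed

lemma dyadically_sublinear_minimal_additive:
  assumes M: "dyadically_sublinear M"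
    and minimal: "\<And>q. dyadically_sublinear q \<Longrightarrow> q \<le> M \<Longrightarrow> q = M"
  shows "additive M"
proof -
  have neg: "M (- z) \<le> - M z" for z
  proof -
    \<comment> \<open>The infimum \<open>Q\<close> of \<open>E\<close> is a dyadically sublinear minorant of \<open>M\<close>, hence equal to \<open>M\<close>.\<close>
    define E where "E x k = M (x + 2 ^ k * z) - 2 ^ k * M z" for x k
    have "E x (Suc k) \<le> E x k" for x k
      using dyadically_sublinear_add[OF M, of "x + 2 ^ k * z" "2 ^ k * z"]
        dyadically_sublinear_power2[OF M, of k z]
      by (simp add: E_def algebra_simps)
    then have mono: "k \<le> k' \<Longrightarrow> E s k' \<le> E s k" for s k k'
      by (metis decseq_Suc_iff decseqD)
    have add: "E (x + y) (Suc k) \<le> E x k + E y k" for x y k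
      using dyadically_sublinear_add[OF M, of "x + 2 ^ k * z" "y + 2 ^ k * z"]
      by (simp add: E_def algebra_simps)
    have double: "E (2 * s) (Suc k) = 2 * E s k" for s k
      using dyadically_sublinear_double[OF M, of "s + 2 ^ k * z"]
      by (simp add: E_def algebra_simps)
    have "- M (- s) \<le> E s k" for s k
      using dyadically_sublinear_add[OF M, of "s + 2 ^ k * z" "- s"]
        dyadically_sublinear_power2[OF M, of k z]
      by (simp add: E_def algebra_simps)
    then have bdd: "\<exists>B. \<forall>k. B \<le> E s k" for s
      by blast
    define Q where "Q s = Inf (E s ` {k. True})" for s
    have Q: "dyadically_sublinear Q" and Q_le: "Q s \<le> E s k" for s k
      using dyadically_sublinear_Inf_decreasing[of "\<lambda>_ _. True" E] mono add double bdd
      unfolding Q_def[abs_def] by auto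
    have "Q \<le> M"
    proof (rule le_funI)
      show "Q x \<le> M x" for x
        using Q_le[of x 0] dyadically_sublinear_add[OF M, of x z] by (simp add: E_def)
    qed
    with Q have "Q = M"
      by (rule minimal)
    then show ?thesis
      using Q_le[of "- z" 0] dyadically_sublinear_zero[OF M] by (simp add: E_def)
  qed
  have "M (x + y) = M x + M y" for x y
    using dyadically_sublinear_add[OF M, of x y] dyadically_sublinear_add[OF M, of "x + y" "- y"]
      neg[of y] dyadically_sublinear_neg_le[OF M, of y]
    by simp
  then show ?thesis
    by (simp add: additive_def)
qed

lemma dyadically_sublinear_chain_Inf:
  assumes "C \<noteq> {}" and sublinear: "\<And>q. q \<in> C \<Longrightarrow> dyadically_sublinear q"
    and chain: "\<And>q r. q \<in> C \<Longrightarrow> r \<in> C \<Longrightarrow> q \<le> r \<or> r \<le> q"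
    and bdd: "\<And>x. bdd_below ((\<lambda>q. q x) ` C)"
  shows "dyadically_sublinear (\<lambda>x. Inf ((\<lambda>q. q x) ` C))" (is "dyadically_sublinear ?U")
proof -
  have le: "?U x \<le> q x" if "q \<in> C" for q x
    using that by (intro cInf_lower[OF _ bdd]) auto
  have Inf_greatest: "c \<le> ?U x" if "\<And>q. q \<in> C \<Longrightarrow> c \<le> q x" for c x
    using that \<open>C \<noteq> {}\<close> by (intro cInf_greatest) auto
  have "?U (x + y) \<le> q x + r y" if "q \<in> C" "r \<in> C" for q r x y
    using chain[OF that] le[OF that(1), of "x + y"] le[OF that(2), of "x + y"]
      dyadically_sublinear_add[OF sublinear[OF that(1)], of x y]
      dyadically_sublinear_add[OF sublinear[OF that(2)], of x y]
    by (auto simp: le_fun_def intro: order_trans add_mono)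
  then have "?U (x + y) - r y \<le> ?U x" if "r \<in> C" for r x y
    using that by (intro Inf_greatest) (simp add: diff_le_eq)
  then have "?U (x + y) - ?U x \<le> ?U y" for x y
    by (intro Inf_greatest) (simp add: diff_le_eq add.commute)
  moreover have "?U (2 * x) = 2 * ?U x" for x
  proof (rule antisym)
    have "?U (2 * x) \<le> 2 * q x" if "q \<in> C" for q
      using le[OF that, of "2 * x"] dyadically_sublinear_double[OF sublinear[OF that]] by simp
    then have "?U (2 * x) / 2 \<le> ?U x"
      by (intro Inf_greatest) (simp add: mult.commute)
    then show "?U (2 * x) \<le> 2 * ?U x" by simp
    show "2 * ?U x \<le> ?U (2 * x)"
      using le by (intro Inf_greatest) (simp add: dyadically_sublinear_double[OF sublinear])
  qed
  ultimately show ?thesis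
    unfolding dyadically_sublinear_def by (simp add: diff_le_eq add.commute)
qed

lemma additive_below_dyadically_sublinear:
  assumes "dyadically_sublinear p"
  shows "\<exists>a. additive a \<and> a \<le> p"
proof -
  define S where "S = {q. dyadically_sublinear q \<and> q \<le> p}"
  have lower: "- p (- x) \<le> q x" if "q \<in> S" for q x
  proof -
    have "dyadically_sublinear q" "q (- x) \<le> p (- x)"
      using that by (auto simp: S_def le_fun_def)
    then show ?thesis
      using dyadically_sublinear_neg_le[of q x] by linarith
  qed
  have "partial_order_on S (relation_of (\<ge>) S)"
    by (rule partial_order_on_relation_ofI) auto
  moreover have "\<exists>u\<in>S. \<forall>q\<in>C. u \<le> q" if C: "C \<in> Chains (relation_of (\<ge>) S)" for C
  proof (cases "C = {}")
    case True
    then show ?thesis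
      using assms by (auto simp: S_def)
  next
    case False
    have "C \<subseteq> S"
      using C unfolding Chains_def relation_of_def by auto
    have bdd: "bdd_below ((\<lambda>q. q x) ` C)" for x
      using lower \<open>C \<subseteq> S\<close> unfolding bdd_below_def by blast
    define U where "U x = Inf ((\<lambda>q. q x) ` C)" for x
    have U_le: "U \<le> q" if "q \<in> C" for q
      using that cInf_lower[OF _ bdd] by (auto simp: U_def le_fun_def)
    have "dyadically_sublinear U"
      unfolding U_def
    proof (rule dyadically_sublinear_chain_Inf[OF False _ _ bdd])
      show "dyadically_sublinear q" if "q \<in> C" for q
        using that \<open>C \<subseteq> S\<close> by (auto simp: S_def)
      show "q \<le> r \<or> r \<le> q" if "q \<in> C" "r \<in> C" for q r
        using C that unfolding Chains_def relation_of_def by auto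
    qed
    moreover obtain q where "q \<in> C"
      using False by auto
    then have "U \<le> p"
      using U_le \<open>C \<subseteq> S\<close> by (auto simp: S_def intro: order_trans)
    ultimately show ?thesis
      using U_le by (auto simp: S_def)
  qed
  ultimately obtain M where "M \<in> S" and minimal: "\<forall>q\<in>S. q \<le> M \<longrightarrow> q = M"
    using predicate_Zorn[of S "(\<ge>)"] by blast
  have "additive M"
    using \<open>M \<in> S\<close> minimal by (intro dyadically_sublinear_minimal_additive) (auto simp: S_def)
  with \<open>M \<in> S\<close> show ?thesis
    by (auto simp: S_def)
qed

text \<open>Only indices with \<open>\<bar>s\<bar> < 2 ^ k\<close> are used, so that \<open>s / 2 ^ k\<close> stays where \<open>f\<close> is convex.\<close>

definition dyadic_envelope :: "(real \<Rightarrow> real) \<Rightarrow> real \<Rightarrow> real" where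
  "dyadic_envelope f s = Inf ((\<lambda>k. 2 ^ k * f (s / 2 ^ k)) ` {k. \<bar>s\<bar> < 2 ^ k})"

context
  fixes f :: "real \<Rightarrow> real"
  assumes midpoint_convex: "\<And>u v. u > -1 \<Longrightarrow> v > -1 \<Longrightarrow> f ((u + v) / 2) \<le> (f u + f v) / 2"
    and f_zero: "f 0 = 0"
begin

lemma midpoint_convex_halving: "u > -1 \<Longrightarrow> 2 ^ d * f (u / 2 ^ d) \<le> f u"
proof (induction d arbitrary: u)
  case 0
  then show ?case by simp
next
  case (Suc d)
  have "2 ^ Suc d * f (u / 2 ^ Suc d) = 2 * (2 ^ d * f ((u / 2) / 2 ^ d))"
    by (simp add: mult.commute)
  also have "\<dots> \<le> 2 * f (u / 2)"
    using Suc.IH[of "u / 2"] Suc.prems by simp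
  also have "\<dots> \<le> f u"
    using midpoint_convex[OF Suc.prems, of 0] f_zero by simp
  finally show ?case .
qed

lemma midpoint_convex_scaled_antimono:
  assumes "\<bar>s\<bar> < 2 ^ k" and "k \<le> k'"
  shows "2 ^ k' * f (s / 2 ^ k') \<le> 2 ^ k * f (s / 2 ^ k)"
proof -
  obtain d where "k' = k + d"
    using \<open>k \<le> k'\<close> le_Suc_ex by blast
  then have "2 ^ k' * f (s / 2 ^ k') = 2 ^ k * (2 ^ d * f ((s / 2 ^ k) / 2 ^ d))"
    by (simp add: power_add mult.commute)
  also have "\<dots> \<le> 2 ^ k * f (s / 2 ^ k)"
    using midpoint_convex_halving[of "s / 2 ^ k" d] assms(1) by (simp add: field_simps)
  finally show ?thesis .
qed

lemma midpoint_convex_scaled_add: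
  assumes "\<bar>x\<bar> < 2 ^ k" and "\<bar>y\<bar> < 2 ^ k"
  shows "2 ^ Suc k * f ((x + y) / 2 ^ Suc k) \<le> 2 ^ k * f (x / 2 ^ k) + 2 ^ k * f (y / 2 ^ k)"
proof -
  have "f ((x / 2 ^ k + y / 2 ^ k) / 2) \<le> (f (x / 2 ^ k) + f (y / 2 ^ k)) / 2"
    using assms by (intro midpoint_convex) (simp_all add: field_simps)
  then have "2 * f ((x + y) / 2 ^ Suc k) \<le> f (x / 2 ^ k) + f (y / 2 ^ k)"
    by (simp add: add_divide_distrib mult.commute)
  then have "2 ^ k * (2 * f ((x + y) / 2 ^ Suc k)) \<le> 2 ^ k * (f (x / 2 ^ k) + f (y / 2 ^ k))"
    by (rule mult_left_mono) simp
  then show ?thesis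
    by (simp add: algebra_simps)
qed

lemma midpoint_convex_scaled_neg:
  assumes "\<bar>s\<bar> < 2 ^ k"
  shows "0 \<le> 2 ^ k * f (s / 2 ^ k) + 2 ^ k * f (- s / 2 ^ k)"
proof -
  have "f ((s / 2 ^ k + - s / 2 ^ k) / 2) \<le> (f (s / 2 ^ k) + f (- s / 2 ^ k)) / 2"
    using assms by (intro midpoint_convex) (simp_all add: field_simps)
  then show ?thesis
    using f_zero by (simp flip: distrib_left)
qed

lemma dyadic_envelope_properties:
  shows dyadically_sublinear_dyadic_envelope: "dyadically_sublinear (dyadic_envelope f)"
    and dyadic_envelope_le: "s > -1 \<Longrightarrow> dyadic_envelope f s \<le> f s"
proof -
  define V where "V s k \<longleftrightarrow> \<bar>s\<bar> < (2::real) ^ k" for s k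
  define E where "E s k = 2 ^ k * f (s / 2 ^ k)" for s k
  have envelope: "dyadic_envelope f = (\<lambda>s. Inf (E s ` {k. V s k}))"
    by (simp add: dyadic_envelope_def E_def V_def fun_eq_iff)
  have mono: "V s k' \<and> E s k' \<le> E s k" if "V s k" "k \<le> k'" for s k k'
  proof -
    have "(2::real) ^ k \<le> 2 ^ k'"
      using \<open>k \<le> k'\<close> by simp
    then have "V s k'"
      using \<open>V s k\<close> unfolding V_def by linarith
    then show ?thesis
      using that midpoint_convex_scaled_antimono[of s k k'] by (simp add: V_def E_def)
  qed
  have ex: "\<exists>k. V s k" for s
    using real_arch_pow[of 2 "\<bar>s\<bar>"] by (auto simp: V_def)
  have bdd: "\<exists>B. \<forall>k. V s k \<longrightarrow> B \<le> E s k" for s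
  proof -
    obtain k0 where "V s k0"
      using ex by blast
    have "- E (- s) k0 \<le> E s k" if "V s k" for k
      using midpoint_convex_scaled_neg[of s "max k k0"] mono[OF that, of "max k k0"]
        mono[of "- s" k0 "max k k0"] \<open>V s k0\<close>
      by (auto simp: V_def E_def)
    then show ?thesis
      by blast
  qed
  have add: "V (x + y) (Suc k) \<and> E (x + y) (Suc k) \<le> E x k + E y k" if "V x k" "V y k" for x y k
    using that midpoint_convex_scaled_add[of x k y] by (auto simp: V_def E_def)
  have double: "V (2 * s) (Suc k) \<and> E (2 * s) (Suc k) = 2 * E s k" if "V s k" for s k
    using that by (simp add: V_def E_def)
  have half: "V s k" if "V (2 * s) k" for s k
    using that by (simp add: V_def)
  note envelope_facts = dyadically_sublinear_Inf_decreasing[of V E, OF mono ex add double half bdd]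
  from envelope_facts(1) show "dyadically_sublinear (dyadic_envelope f)"
    by (simp add: envelope)
  show "dyadic_envelope f s \<le> f s" if "s > -1"
  proof -
    obtain k where "V s k"
      using ex by blast
    then show ?thesis
      using envelope_facts(2) midpoint_convex_halving[OF that, of k] by (fastforce simp: envelope E_def)
  qed
qed

lemma additive_minorant_if_midpoint_convex: "\<exists>a. additive a \<and> (\<forall>s>-1. a s \<le> f s)"
proof -
  obtain a where "additive a" and "a \<le> dyadic_envelope f"
    using additive_below_dyadically_sublinear[OF dyadically_sublinear_dyadic_envelope] by blast
  moreover have "a s \<le> f s" if "s > -1" for s
    using le_funD[OF \<open>a \<le> dyadic_envelope f\<close>, of s] dyadic_envelope_le[OF that] by linarith
  ultimately show ?thesis
    by blast
qed

end

lemma additive_minorant_if_jensen_convex: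
  assumes "jensen_convex_pos m" and "m 1 = 1"
  shows "\<exists>a. additive a \<and> (\<forall>t>0. 1 + a (t - 1) \<le> m t)"
proof -
  have jensen: "m ((x + y) / 2) \<le> (m x + m y) / 2" if "x > 0" "y > 0" for x y
    using assms(1) that unfolding jensen_convex_pos_def by blast
  define f where "f s = m (1 + s) - 1" for s
  have "f ((u + v) / 2) \<le> (f u + f v) / 2" if "u > -1" "v > -1" for u v
  proof -
    have "m (((1 + u) + (1 + v)) / 2) \<le> (m (1 + u) + m (1 + v)) / 2"
      using that by (intro jensen) auto
    then show ?thesis
      by (simp add: f_def field_simps)
  qed
  moreover have "f 0 = 0"
    using assms(2) by (simp add: f_def)
  ultimately obtain a where "additive a" and a_le: "\<And>s. s > -1 \<Longrightarrow> a s \<le> f s"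
    using additive_minorant_if_midpoint_convex[of f] by blast
  moreover have "1 + a (t - 1) \<le> m t" if "t > 0" for t
    using a_le[of "t - 1"] that by (simp add: f_def)
  ultimately show ?thesis
    by blast
qed

lemma jensen_convex_if_additive_minorant:
  assumes m: "multiplicative_pos m" and a: "additive a"
    and minorant: "\<And>t. t > 0 \<Longrightarrow> 1 + a (t - 1) \<le> m t"
  shows "jensen_convex_pos m"
  unfolding jensen_convex_pos_def
proof (intro allI impI)
  fix x y :: real
  assume "x > 0" "y > 0"
  define u where "u = (x + y) / 2"
  have "u > 0"
    using \<open>x > 0\<close> \<open>y > 0\<close> by (simp add: u_def)
  have "a 0 = 0"
    using a unfolding additive_def by (metis add_0 add_cancel_right_right)
  moreover have "(x / u - 1) + (y / u - 1) = 0"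
    using \<open>u > 0\<close> by (simp add: u_def field_simps)
  ultimately have "a (x / u - 1) + a (y / u - 1) = 0"
    using a unfolding additive_def by metis
  then have "2 \<le> m (x / u) + m (y / u)"
    using minorant[of "x / u"] minorant[of "y / u"] \<open>x > 0\<close> \<open>y > 0\<close> \<open>u > 0\<close> by simp
  then have "m u * 2 \<le> m u * (m (x / u) + m (y / u))"
    using m \<open>u > 0\<close> unfolding multiplicative_pos_def by simp
  also have "\<dots> = m (u * (x / u)) + m (u * (y / u))"
    using m \<open>x > 0\<close> \<open>y > 0\<close> \<open>u > 0\<close> unfolding multiplicative_pos_def
    by (simp only: distrib_left divide_pos_pos)
  also have "\<dots> = m x + m y"
    using \<open>u > 0\<close> by simp
  finally show "m ((x + y) / 2) \<le> (m x + m y) / 2"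
    by (simp add: u_def)
qed

theorem theorem5:
  fixes m :: "real \<Rightarrow> real"
  assumes "multiplicative_pos m"
  shows "jensen_convex_pos m \<longleftrightarrow>
           (\<exists>a. additive a \<and> (\<forall>t>0. m t \<ge> 1 + a (t - 1)))"
proof
  have "m (1 * 1) = m 1 * m 1" and "m 1 > 0"
    using assms unfolding multiplicative_pos_def by (blast intro: zero_less_one)+
  then have "m 1 = 1"
    by simp
  then show "jensen_convex_pos m \<Longrightarrow> \<exists>a. additive a \<and> (\<forall>t>0. m t \<ge> 1 + a (t - 1))"
    using additive_minorant_if_jensen_convex by blast
  show "\<exists>a. additive a \<and> (\<forall>t>0. m t \<ge> 1 + a (t - 1)) \<Longrightarrow> jensen_convex_pos m"
    using jensen_convex_if_additive_minorant[OF assms] by blast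
qed

end
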